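(* Suppose that property LD holds and $\inf_{E\in\mathbb{R}}L(E)>0$. Then for $P$-almost every $\omega\in\Omega$, $$\liminf_{N\to\infty}\left(-\frac1N\log\mathcal{I}(N,\omega)\right)>0.$$
   Context: Let $(\Omega,\mathcal F,P)$ be a probability space and $\phi:\Omega\to\Omega$ a measurable bijection with measurable inverse, $P$-preserving and ergodic. Let $f:\Omega\to\mathbb{R}$ be bounded measurable and $v_\omega(n)=f(\phi^n\omega)$, $n\in\mathbb{Z}$. For $E\in\mathbb{R}$, $T_{N,\omega}(E)=A_{N,\omega}(E)\cdots A_{1,\omega}(E)$ with $A_{n,\omega}(E)=\begin{pmatrix}v_\omega(n)-E&-1\\1&0\end{pmatrix}$; $\|\cdot\|$ is the operator norm. The Lyapunov exponent is $L(E)=\lim_{N\to\infty}\frac1N\int_\Omega\log\|T_{N,\omega}(E)\|\,dP(\omega)$. Define $\mathcal{I}(N,\omega)=\int_{-\infty}^{\infty}\frac{dE}{\|T_{N,\omega}(E)\|^2}$. Property LD (large deviation type estimate) means: for every $\epsilon>0$ and every finite closed interval $[a,b]$ there are constants $C,\eta>0$ such that $P\left(\left\{\omega:\left|\frac1N\log\|T_{N,\omega}(E)\|-L(E)\right|\ge\epsilon\right\}\right)\le Ce^{-\eta N}$ for all $N\in\mathbb{N}$ and all $E\in[a,b]$. *)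

theory Defs
  imports "HOL-Probability.Probability"
begin

definition transfer_step :: "real \<Rightarrow> real \<Rightarrow> real^2^2" where
  "transfer_step vn E = vector [vector [vn - E, -1], vector [1, 0]]"

fun transfer :: "('a \<Rightarrow> 'a) \<Rightarrow> ('a \<Rightarrow> real) \<Rightarrow> real \<Rightarrow> nat \<Rightarrow> 'a \<Rightarrow> real^2^2" where
  "transfer \<phi> f E 0 \<omega> = mat 1"
| "transfer \<phi> f E (Suc n) \<omega> = transfer_step (f ((\<phi> ^^ Suc n) \<omega>)) E ** transfer \<phi> f E n \<omega>"

definition opnorm :: "real^2^2 \<Rightarrow> real" where
  "opnorm A = onorm (\<lambda>x. A *v x)"

definition lyap :: "'a measure \<Rightarrow> ('a \<Rightarrow> 'a) \<Rightarrow> ('a \<Rightarrow> real) \<Rightarrow> real \<Rightarrow> real" where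
  "lyap M \<phi> f E = lim (\<lambda>N. (1 / real N) * (\<integral>\<omega>. ln (opnorm (transfer \<phi> f E N \<omega>)) \<partial>M))"

definition II :: "('a \<Rightarrow> 'a) \<Rightarrow> ('a \<Rightarrow> real) \<Rightarrow> nat \<Rightarrow> 'a \<Rightarrow> real" where
  "II \<phi> f N \<omega> = (\<integral>E. 1 / (opnorm (transfer \<phi> f E N \<omega>))^2 \<partial>lborel)"

definition property_LD :: "'a measure \<Rightarrow> ('a \<Rightarrow> 'a) \<Rightarrow> ('a \<Rightarrow> real) \<Rightarrow> bool" where
  "property_LD M \<phi> f \<longleftrightarrow>
     (\<forall>\<epsilon>>0. \<forall>a b. a \<le> b \<longrightarrow>
        (\<exists>C \<eta>. C > 0 \<and> \<eta> > 0 \<and>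
          (\<forall>N::nat. N \<ge> 1 \<longrightarrow> (\<forall>E\<in>{a..b}.
             measure M {\<omega> \<in> space M.
               \<bar>(1 / real N) * ln (opnorm (transfer \<phi> f E N \<omega>)) - lyap M \<phi> f E\<bar> \<ge> \<epsilon>}
             \<le> C * exp (- \<eta> * real N)))))"

definition ergodic_map :: "'a measure \<Rightarrow> ('a \<Rightarrow> 'a) \<Rightarrow> bool" where
  "ergodic_map M \<phi> \<longleftrightarrow>
     (\<forall>A\<in>sets M. \<phi> -` A \<inter> space M = A \<longrightarrow> measure M A = 0 \<or> measure M A = 1)"

end

theory Submission
  imports Defs
begin

text \<open>Since \<open>det T\<^sub>N = 1\<close>, always \<open>\<parallel>T\<^sub>N(E)\<parallel> \<ge> 1\<close>; with LD this forces \<open>L \<ge> 0\<close>, so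
  \<open>\<gamma> = inf L\<close> bounds every \<open>L(E)\<close> from below. Let \<open>B\<close> bound \<open>\<bar>f\<bar>\<close>. For \<open>\<bar>E\<bar> > 2B + 5\<close> the
  transfer matrices grow deterministically like \<open>(\<bar>E\<bar> - B - 1)\<^sup>N\<close>, so that part of \<open>I(N, \<omega>)\<close>
  is \<open>O(exp (-N))\<close> uniformly in \<open>\<omega>\<close>. On the window \<open>\<bar>E\<bar> \<le> 2B + 5\<close>, LD bounds the
  expectation of \<open>\<parallel>T\<^sub>N(E)\<parallel>\<^sup>-\<^sup>2\<close> by \<open>exp (-\<gamma>N) + C exp (-\<eta>N)\<close>; by Fubini the expected window
  part of \<open>I\<close> decays exponentially, and Markov's inequality with Borel--Cantelli makes it at
  most \<open>exp (-\<delta>N)\<close> eventually, for almost every \<open>\<omega>\<close>. Hence \<open>I(N, \<omega>) \<le> C' exp (-\<delta>N)\<close>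
  eventually.\<close>

lemma onorm_matrix_lipschitz:
  fixes A B :: "real^'n^'m"
  shows "onorm ((*v) A) \<le> onorm ((*v) B) + real CARD('m) * real CARD('n) * norm (A - B)"
proof -
  have "onorm ((*v) A) \<le> onorm ((*v) B) + onorm ((*v) (A - B))"
    using onorm_triangle[OF matrix_vector_mul_bounded_linear matrix_vector_mul_bounded_linear, of B "A - B"]
    by (simp add: matrix_vector_mult_diff_rdistrib)
  moreover have "\<bar>(A - B) $ i $ j\<bar> \<le> norm (A - B)" for i j
    using component_le_norm_cart[of "(A - B) $ i" j] Finite_Cartesian_Product.norm_nth_le[of "A - B" i]
    by linarith
  then have "onorm ((*v) (A - B)) \<le> real CARD('m) * real CARD('n) * norm (A - B)"
    by (rule onorm_le_matrix_component)
  ultimately show ?thesis by linarith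
qed

lemma continuous_on_onorm_matrix: "continuous_on UNIV (\<lambda>A::real^'n^'m. onorm ((*v) A))"
proof (rule lipschitz_on_continuous_on, rule lipschitz_onI)
  fix A B :: "real^'n^'m"
  show "dist (onorm ((*v) A)) (onorm ((*v) B)) \<le> real CARD('m) * real CARD('n) * dist A B"
    using onorm_matrix_lipschitz[of A B] onorm_matrix_lipschitz[of B A]
    by (simp add: dist_real_def dist_norm norm_minus_commute abs_le_iff)
qed simp

lemma opnorm_measurable [measurable]: "opnorm \<in> borel_measurable borel"
  unfolding opnorm_def by (rule borel_measurable_continuous_onI[OF continuous_on_onorm_matrix])

lemma one_le_opnorm_if_abs_det:
  fixes A :: "real^2^2"
  assumes "1 \<le> \<bar>det A\<bar>"
  shows "1 \<le> opnorm A"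
proof -
  let ?c1 = "norm (column 1 A)" and ?c2 = "norm (column 2 A)"
  have col: "(norm (column j A))\<^sup>2 = (A$1$j)\<^sup>2 + (A$2$j)\<^sup>2" for j
    by (simp add: norm_vec_def L2_set_def sum_2 column_def)
  have lagrange: "(a\<^sup>2 + c\<^sup>2) * (b\<^sup>2 + d\<^sup>2) = (a * d - b * c)\<^sup>2 + (a * b + c * d)\<^sup>2" for a b c d :: real
    by algebra
  have "1 \<le> (det A)\<^sup>2"
    using one_le_power[OF assms, of 2] by simp
  also have "\<dots> \<le> (?c1 * ?c2)\<^sup>2"
    unfolding power_mult_distrib col lagrange by (simp add: det_2)
  finally have "1 \<le> ?c1 * ?c2"
    using power2_le_imp_le[of 1 "?c1 * ?c2"] by simp
  then have "1 \<le> ?c1 \<or> 1 \<le> ?c2"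
    using mult_strict_mono'[of ?c1 1 ?c2 1] by force
  then show ?thesis
    unfolding opnorm_def using norm_column_le_onorm[of 1 A] norm_column_le_onorm[of 2 A] by linarith
qed

lemma transfer_step_entries [simp]:
  "transfer_step v E $ 1 $ 1 = v - E" "transfer_step v E $ 1 $ 2 = -1"
  "transfer_step v E $ 2 $ 1 = 1" "transfer_step v E $ 2 $ 2 = 0"
  by (simp_all add: transfer_step_def)

lemma det_transfer_step: "det (transfer_step v E) = 1"
  by (simp add: det_2)

lemma det_transfer: "det (transfer \<phi> f E n \<omega>) = 1"
  by (induction n) (simp_all add: det_mul det_transfer_step del: funpow.simps)

lemma one_le_opnorm_transfer: "1 \<le> opnorm (transfer \<phi> f E n \<omega>)"
  by (simp add: one_le_opnorm_if_abs_det det_transfer)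

lemma transfer_Suc_first_column:
  "transfer \<phi> f E (Suc n) \<omega> $ 1 $ 1 =
     (f ((\<phi> ^^ Suc n) \<omega>) - E) * transfer \<phi> f E n \<omega> $ 1 $ 1 - transfer \<phi> f E n \<omega> $ 2 $ 1"
  "transfer \<phi> f E (Suc n) \<omega> $ 2 $ 1 = transfer \<phi> f E n \<omega> $ 1 $ 1"
  by (simp_all add: matrix_matrix_mult_def sum_2)

lemma transfer_first_column_growth:
  assumes v: "\<And>k. \<bar>f ((\<phi> ^^ k) \<omega>)\<bar> \<le> B" and E: "1 \<le> \<bar>E\<bar> - B - 1"
  shows "(\<bar>E\<bar> - B - 1) ^ n \<le> \<bar>transfer \<phi> f E n \<omega> $ 1 $ 1\<bar>
    \<and> \<bar>transfer \<phi> f E n \<omega> $ 2 $ 1\<bar> \<le> \<bar>transfer \<phi> f E n \<omega> $ 1 $ 1\<bar>"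
proof (induction n)
  case 0
  show ?case by (simp add: mat_def)
next
  case (Suc n)
  let ?r = "\<bar>E\<bar> - B - 1" and ?v = "f ((\<phi> ^^ Suc n) \<omega>)"
  let ?a = "transfer \<phi> f E n \<omega> $ 1 $ 1" and ?b = "transfer \<phi> f E n \<omega> $ 2 $ 1"
  have "\<bar>E\<bar> - B \<le> \<bar>?v - E\<bar>"
    using v[of "Suc n"] by linarith
  then have "(\<bar>E\<bar> - B) * \<bar>?a\<bar> \<le> \<bar>?v - E\<bar> * \<bar>?a\<bar>"
    by (rule mult_right_mono) simp
  then have "?r * \<bar>?a\<bar> \<le> \<bar>?v - E\<bar> * \<bar>?a\<bar> - \<bar>?b\<bar>"
    using Suc.IH by (simp add: left_diff_distrib)
  also have "\<dots> \<le> \<bar>(?v - E) * ?a - ?b\<bar>"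
    using abs_triangle_ineq4[of "(?v - E) * ?a" ?b] by (simp add: abs_mult)
  finally have step: "?r * \<bar>?a\<bar> \<le> \<bar>(?v - E) * ?a - ?b\<bar>" .
  have "?r ^ Suc n \<le> ?r * \<bar>?a\<bar>" and "\<bar>?a\<bar> \<le> ?r * \<bar>?a\<bar>"
    using Suc.IH E by (simp_all add: mult_left_mono mult_le_cancel_right1)
  then show ?case
    unfolding transfer_Suc_first_column using step by linarith
qed

lemma opnorm_transfer_ge_power:
  assumes "\<And>k. \<bar>f ((\<phi> ^^ k) \<omega>)\<bar> \<le> B" and "1 \<le> \<bar>E\<bar> - B - 1"
  shows "(\<bar>E\<bar> - B - 1) ^ n \<le> opnorm (transfer \<phi> f E n \<omega>)"
  using transfer_first_column_growth[of f \<phi> \<omega> B E n, OF assms]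
    matrix_component_le_onorm[of "transfer \<phi> f E n \<omega>" 1 1]
  unfolding opnorm_def by linarith

lemma transfer_step_affine:
  "transfer_step v E = (v - E) *\<^sub>R vector [vector [1, 0], vector [0, 0]] + vector [vector [0, -1], vector [1, 0]]"
  by (simp add: vec_eq_iff forall_2 transfer_step_def)

lemma transfer_measurable [measurable]:
  assumes [measurable]: "e \<in> borel_measurable Q" and w [measurable]: "w \<in> measurable Q M"
    and \<phi> [measurable]: "\<phi> \<in> measurable M M" and f [measurable]: "f \<in> borel_measurable M"
  shows "(\<lambda>q. transfer \<phi> f (e q) n (w q)) \<in> borel_measurable Q"
proof (induction n)
  case 0
  show ?case by simp
next
  case (Suc n)
  have "(\<lambda>q. f ((\<phi> ^^ Suc n) (w q))) \<in> borel_measurable Q"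
    using measurable_compose[OF measurable_compose[OF w measurable_compose_n[OF \<phi>]] f]
    by (simp add: comp_def del: funpow.simps)
  then have "(\<lambda>q. transfer_step (f ((\<phi> ^^ Suc n) (w q))) (e q)) \<in> borel_measurable Q"
    unfolding transfer_step_affine by measurable
  moreover have "continuous_on UNIV (\<lambda>x::(real^2^2) \<times> (real^2^2). fst x ** snd x)"
    unfolding matrix_matrix_mult_def by (intro continuous_intros)
  ultimately show ?case
    using borel_measurable_continuous_Pair[OF _ Suc.IH] by (simp del: funpow.simps)
qed

lemma nn_integral_inverse_1_plus_square: "(\<integral>\<^sup>+x. ennreal (inverse (1 + x\<^sup>2)) \<partial>lborel) = ennreal pi"
proof -
  have "integrable lborel (\<lambda>x::real. inverse (1 + x\<^sup>2))"
    using integrable_inverse_1_plus_square by (simp add: set_integrable_def einterval_def)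
  moreover have "(\<integral>x. inverse (1 + x\<^sup>2) \<partial>lborel) = pi"
    using LBINT_inverse_1_plus_square
    by (simp add: interval_lebesgue_integral_def set_lebesgue_integral_def einterval_def)
  ultimately show ?thesis
    by (subst nn_integral_eq_integral) auto
qed

lemma inverse_square_le_of_power_le:
  fixes B E y :: real
  assumes "0 \<le> B" and E: "2 * B + 5 < \<bar>E\<bar>" and "1 \<le> N" and y: "(\<bar>E\<bar> - B - 1) ^ N \<le> y"
  shows "1 / y\<^sup>2 \<le> 8 * (B + 4)\<^sup>2 * exp (- real N) * inverse (1 + E\<^sup>2)"
proof -
  define r where "r = \<bar>E\<bar> - B - 1"
  define q where "q = B + 4"
  obtain m where N: "N = Suc m"
    using \<open>1 \<le> N\<close> by (cases N) auto
  have "4 \<le> q" and "q \<le> r" and "\<bar>E\<bar> \<le> 2 * r" and "1 \<le> \<bar>E\<bar>"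
    using \<open>0 \<le> B\<close> E by (simp_all add: q_def r_def)
  have "1 + E\<^sup>2 \<le> 8 * r\<^sup>2"
    using mult_mono[OF \<open>\<bar>E\<bar> \<le> 2 * r\<close> \<open>\<bar>E\<bar> \<le> 2 * r\<close>] mult_mono[OF \<open>1 \<le> \<bar>E\<bar>\<close> \<open>1 \<le> \<bar>E\<bar>\<close>] \<open>4 \<le> q\<close> \<open>q \<le> r\<close>
    by (simp add: power2_eq_square)
  moreover have "exp (real N) \<le> q\<^sup>2 * (q ^ m)\<^sup>2"
  proof -
    have "exp (real N) = exp 1 ^ N"
      by (simp add: exp_of_nat_mult[symmetric])
    also have "\<dots> \<le> q ^ N"
      using exp_le \<open>4 \<le> q\<close> by (intro power_mono) auto
    also have "\<dots> \<le> q\<^sup>2 * (q ^ m)\<^sup>2"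
    proof -
      have "1 \<le> q ^ m"
        using \<open>4 \<le> q\<close> by (simp add: one_le_power)
      then have "q \<le> q\<^sup>2" "q ^ m \<le> (q ^ m)\<^sup>2"
        using \<open>4 \<le> q\<close> by (simp_all add: power2_eq_square)
      then show ?thesis
        unfolding N using \<open>4 \<le> q\<close> by (auto intro: mult_mono)
    qed
    finally show ?thesis .
  qed
  ultimately have "(1 + E\<^sup>2) * exp (real N) \<le> 8 * r\<^sup>2 * (q\<^sup>2 * (q ^ m)\<^sup>2)"
    by (intro mult_mono) auto
  also have "\<dots> = 8 * q\<^sup>2 * (r\<^sup>2 * (q ^ m)\<^sup>2)"
    by (simp add: ac_simps)
  also have "\<dots> \<le> 8 * q\<^sup>2 * (r\<^sup>2 * (r ^ m)\<^sup>2)"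
    using \<open>4 \<le> q\<close> \<open>q \<le> r\<close> by (intro mult_left_mono power_mono) auto
  also have "r\<^sup>2 * (r ^ m)\<^sup>2 = (r ^ N)\<^sup>2"
    unfolding N by (simp add: power_mult_distrib)
  also have "(r ^ N)\<^sup>2 \<le> y\<^sup>2"
    using y \<open>4 \<le> q\<close> \<open>q \<le> r\<close> unfolding r_def by (intro power_mono) auto
  finally have "(1 + E\<^sup>2) * exp (real N) \<le> 8 * q\<^sup>2 * y\<^sup>2"
    by (simp add: mult_left_mono)
  moreover have "0 < y"
    using y \<open>4 \<le> q\<close> \<open>q \<le> r\<close> unfolding r_def by (smt (verit) zero_less_power)
  ultimately show ?thesis
    unfolding q_def by (simp add: exp_minus field_simps add_pos_nonneg)
qed

lemma liminf_neg_ln_pos_of_exponential_decay: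
  fixes x :: "nat \<Rightarrow> real" and \<delta> C :: real
  assumes "0 < \<delta>" and decay: "eventually (\<lambda>N. 0 < x N \<and> x N \<le> C * exp (- \<delta> * N)) sequentially"
  shows "0 < liminf (\<lambda>N. ereal (- (1 / real N) * ln (x N)))"
proof -
  have "eventually (\<lambda>N. 2 * ln C / \<delta> \<le> real N \<and> 1 \<le> N) sequentially"
    using eventually_ge_at_top[of "max 1 (nat \<lceil>2 * ln C / \<delta>\<rceil>)"]
    by eventually_elim linarith
  with decay have "eventually (\<lambda>N. ereal (\<delta> / 2) \<le> ereal (- (1 / real N) * ln (x N))) sequentially"
  proof eventually_elim
    case (elim N)
    then have "0 < C"
      by (smt (verit) exp_gt_zero mult_nonpos_nonneg)
    have "ln (x N) \<le> ln (C * exp (- \<delta> * N))"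
      using elim by simp
    also have "\<dots> = ln C - \<delta> * N"
      using \<open>0 < C\<close> by (simp add: ln_mult)
    also have "\<dots> \<le> - (\<delta> / 2) * N"
      using elim \<open>0 < \<delta>\<close> by (simp add: field_simps)
    finally show ?case
      using elim by (simp add: field_simps)
  qed
  then have "ereal (\<delta> / 2) \<le> liminf (\<lambda>N. ereal (- (1 / real N) * ln (x N)))"
    by (rule Liminf_bounded)
  moreover have "0 < ereal (\<delta> / 2)"
    using \<open>0 < \<delta>\<close> by simp
  ultimately show ?thesis
    by (rule order.strict_trans2[rotated])
qed

definition II_on :: "real set \<Rightarrow> ('a \<Rightarrow> 'a) \<Rightarrow> ('a \<Rightarrow> real) \<Rightarrow> nat \<Rightarrow> 'a \<Rightarrow> ennreal" where
  "II_on S \<phi> f N \<omega> = (\<integral>\<^sup>+E. ennreal (1 / (opnorm (transfer \<phi> f E N \<omega>))\<^sup>2) * indicator S E \<partial>lborel)"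

text \<open>For a fixed \<open>\<omega>\<close> the orbit is an arbitrary sequence; the discrete \<open>\<sigma>\<close>-algebra makes
  \<open>\<phi>\<close> and \<open>f\<close> trivially measurable.\<close>
lemma transfer_measurable_energy [measurable]: "(\<lambda>E. transfer \<phi> f E N \<omega>) \<in> borel_measurable borel"
  using transfer_measurable[of "\<lambda>E. E" borel "\<lambda>_. \<omega>" "count_space UNIV" \<phi> f N] by simp

lemma II_on_split:
  assumes "S \<in> sets borel"
  shows "II_on UNIV \<phi> f N \<omega> = II_on S \<phi> f N \<omega> + II_on (- S) \<phi> f N \<omega>"
  unfolding II_on_def using assms
  by (subst nn_integral_add[symmetric]) (auto intro!: nn_integral_cong split: split_indicator)

lemma II_eq_enn2real: "II \<phi> f N \<omega> = enn2real (II_on UNIV \<phi> f N \<omega>)"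
  unfolding II_def II_on_def by (simp add: integral_eq_nn_integral)

lemma II_on_UNIV_pos: "0 < II_on UNIV \<phi> f N \<omega>"
proof (rule ccontr)
  have pos: "0 < 1 / (opnorm (transfer \<phi> f E N \<omega>))\<^sup>2" for E
    using one_le_opnorm_transfer[of \<phi> f E N \<omega>] by simp
  assume "\<not> 0 < II_on UNIV \<phi> f N \<omega>"
  then have "AE E in lborel. ennreal (1 / (opnorm (transfer \<phi> f E N \<omega>))\<^sup>2) = 0"
    unfolding II_on_def by (simp add: nn_integral_0_iff_AE)
  then have "emeasure lborel {E \<in> space lborel. ennreal (1 / (opnorm (transfer \<phi> f E N \<omega>))\<^sup>2) \<noteq> 0} = 0"
    by (rule AE_E2)
  moreover have "{E \<in> space lborel. ennreal (1 / (opnorm (transfer \<phi> f E N \<omega>))\<^sup>2) \<noteq> 0} = UNIV"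
    using pos by (auto simp: not_le)
  ultimately show False
    by simp
qed

lemma II_pos_le_if_II_on_le:
  assumes le: "II_on UNIV \<phi> f N \<omega> \<le> ennreal c"
  shows "0 < II \<phi> f N \<omega> \<and> II \<phi> f N \<omega> \<le> c"
proof -
  have pos: "0 < II_on UNIV \<phi> f N \<omega>"
    by (rule II_on_UNIV_pos)
  have fin: "II_on UNIV \<phi> f N \<omega> < \<top>"
    by (rule order.strict_trans1[OF le ennreal_less_top])
  have "0 < c"
    using order.strict_trans2[OF pos le] by simp
  then have "enn2real (II_on UNIV \<phi> f N \<omega>) \<le> c"
    using enn2real_mono[OF le] by simp
  with pos fin show ?thesis
    unfolding II_eq_enn2real by (simp add: enn2real_positive_iff)
qed

lemma II_on_measurable [measurable]:
  assumes [measurable]: "\<phi> \<in> measurable M M" "f \<in> borel_measurable M" "S \<in> sets borel"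
  shows "(\<lambda>\<omega>. II_on S \<phi> f N \<omega>) \<in> borel_measurable M"
  unfolding II_on_def by measurable

lemma II_on_tail_le:
  assumes v: "\<And>k. \<bar>f ((\<phi> ^^ k) \<omega>)\<bar> \<le> B" and "0 \<le> B" and "1 \<le> N"
  shows "II_on (- {- (2 * B + 5) .. 2 * B + 5}) \<phi> f N \<omega> \<le> ennreal (8 * pi * (B + 4)\<^sup>2 * exp (- real N))"
proof -
  let ?c = "8 * (B + 4)\<^sup>2 * exp (- real N)"
  have "ennreal (1 / (opnorm (transfer \<phi> f E N \<omega>))\<^sup>2) * indicator (- {- (2 * B + 5) .. 2 * B + 5}) E
      \<le> ennreal ?c * ennreal (inverse (1 + E\<^sup>2))" for E
  proof (cases "E \<in> {- (2 * B + 5) .. 2 * B + 5}")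
    case False
    then have E: "2 * B + 5 < \<bar>E\<bar>"
      by auto
    then have "(\<bar>E\<bar> - B - 1) ^ N \<le> opnorm (transfer \<phi> f E N \<omega>)"
      using \<open>0 \<le> B\<close> by (intro opnorm_transfer_ge_power v) simp
    then have "1 / (opnorm (transfer \<phi> f E N \<omega>))\<^sup>2 \<le> ?c * inverse (1 + E\<^sup>2)"
      by (rule inverse_square_le_of_power_le[OF \<open>0 \<le> B\<close> E \<open>1 \<le> N\<close>])
    with False show ?thesis
      by (simp add: ennreal_mult[symmetric] add_pos_nonneg)
  qed simp
  then have "II_on (- {- (2 * B + 5) .. 2 * B + 5}) \<phi> f N \<omega>
      \<le> (\<integral>\<^sup>+E. ennreal ?c * ennreal (inverse (1 + E\<^sup>2)) \<partial>lborel)"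
    unfolding II_on_def by (rule nn_integral_mono)
  also have "\<dots> = ennreal ?c * ennreal pi"
    by (simp add: nn_integral_cmult nn_integral_inverse_1_plus_square)
  also have "\<dots> = ennreal (8 * pi * (B + 4)\<^sup>2 * exp (- real N))"
    by (simp add: ennreal_mult[symmetric] ac_simps)
  finally show ?thesis .
qed

text \<open>As \<open>\<parallel>T\<^sub>N\<parallel> \<ge> 1\<close>, a negative exponent would make every \<open>\<omega>\<close> a large deviation.\<close>
lemma lyap_nonneg_if_property_LD:
  assumes "prob_space M" and LD: "property_LD M \<phi> f"
  shows "0 \<le> lyap M \<phi> f E"
proof (rule ccontr)
  interpret prob_space M by fact
  let ?L = "lyap M \<phi> f E"
  let ?dev = "\<lambda>N \<omega>. \<bar>(1 / real N) * ln (opnorm (transfer \<phi> f E N \<omega>)) - ?L\<bar>"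
  assume "\<not> 0 \<le> ?L"
  then obtain C \<eta> where "0 < \<eta>"
    and bound: "\<And>N. 1 \<le> N \<Longrightarrow> measure M {\<omega> \<in> space M. - ?L \<le> ?dev N \<omega>} \<le> C * exp (- \<eta> * real N)"
    using LD[unfolded property_LD_def, rule_format, of "- ?L" E E] by auto
  have "(\<lambda>N. C * exp (- \<eta>) ^ N) \<longlonglongrightarrow> 0"
    using \<open>0 < \<eta>\<close> by (intro tendsto_mult_right_zero LIMSEQ_power_zero) simp
  then have "eventually (\<lambda>N. C * exp (- \<eta>) ^ N < 1) sequentially"
    by (rule order_tendstoD) simp
  then obtain N where N: "C * exp (- \<eta> * real N) < 1" "1 \<le> N"
    using eventually_ge_at_top[of 1] unfolding exp_of_nat_mult[symmetric]
    by (metis (no_types, lifting) eventually_conj eventually_happens' mult.commute sequentially_bot)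
  have "- ?L \<le> ?dev N \<omega>" for \<omega>
  proof -
    have "0 \<le> (1 / real N) * ln (opnorm (transfer \<phi> f E N \<omega>))"
      using one_le_opnorm_transfer[of \<phi> f E N \<omega>] by simp
    then show ?thesis
      using abs_ge_self[of "(1 / real N) * ln (opnorm (transfer \<phi> f E N \<omega>)) - ?L"] by linarith
  qed
  then have "{\<omega> \<in> space M. - ?L \<le> ?dev N \<omega>} = space M"
    by auto
  with bound[OF N(2)] N(1) show False
    by (simp add: prob_space)
qed

lemma inverse_square_le_exp_of_ln:
  fixes x c :: real
  assumes "0 < x" and "c \<le> 2 * ln x"
  shows "1 / x\<^sup>2 \<le> exp (- c)"
proof -
  have "1 / x\<^sup>2 = exp (- ln (x\<^sup>2))"
    using assms by (simp add: exp_minus inverse_eq_divide)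
  also have "\<dots> = exp (- (2 * ln x))"
    using assms by (simp add: ln_realpow)
  also have "\<dots> \<le> exp (- c)"
    using assms by simp
  finally show ?thesis .
qed

lemma nn_integral_inverse_square_opnorm_le:
  assumes "prob_space M" and [measurable]: "\<phi> \<in> measurable M M" "f \<in> borel_measurable M"
    and "1 \<le> N" and lyap: "\<gamma> \<le> lyap M \<phi> f E"
  shows "(\<integral>\<^sup>+\<omega>. ennreal (1 / (opnorm (transfer \<phi> f E N \<omega>))\<^sup>2) \<partial>M)
    \<le> ennreal (exp (- \<gamma> * N)) + emeasure M {\<omega> \<in> space M.
         \<gamma> / 2 \<le> \<bar>(1 / real N) * ln (opnorm (transfer \<phi> f E N \<omega>)) - lyap M \<phi> f E\<bar>}"
    (is "_ \<le> _ + emeasure M ?bad")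
proof -
  interpret prob_space M by fact
  have "ennreal (1 / (opnorm (transfer \<phi> f E N \<omega>))\<^sup>2) \<le> ennreal (exp (- \<gamma> * N)) + indicator ?bad \<omega>"
    if "\<omega> \<in> space M" for \<omega>
  proof (cases "\<omega> \<in> ?bad")
    case True
    have "1 / (opnorm (transfer \<phi> f E N \<omega>))\<^sup>2 \<le> 1"
      using one_le_opnorm_transfer[of \<phi> f E N \<omega>] by simp
    with True show ?thesis
      by (simp add: add_increasing)
  next
    case False
    let ?x = "(1 / real N) * ln (opnorm (transfer \<phi> f E N \<omega>))"
    have "\<gamma> / 2 < ?x"
      using False that lyap abs_ge_minus_self[of "?x - lyap M \<phi> f E"] by auto
    then have "\<gamma> * N \<le> 2 * ln (opnorm (transfer \<phi> f E N \<omega>))"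
      using \<open>1 \<le> N\<close> by (simp add: field_simps)
    then have "1 / (opnorm (transfer \<phi> f E N \<omega>))\<^sup>2 \<le> exp (- \<gamma> * N)"
      using inverse_square_le_exp_of_ln[of "opnorm (transfer \<phi> f E N \<omega>)" "\<gamma> * N"]
        one_le_opnorm_transfer[of \<phi> f E N \<omega>] by simp
    with False show ?thesis
      by simp
  qed
  then have "(\<integral>\<^sup>+\<omega>. ennreal (1 / (opnorm (transfer \<phi> f E N \<omega>))\<^sup>2) \<partial>M)
      \<le> (\<integral>\<^sup>+\<omega>. ennreal (exp (- \<gamma> * N)) + indicator ?bad \<omega> \<partial>M)"
    by (rule nn_integral_mono)
  also have "\<dots> = ennreal (exp (- \<gamma> * N)) + emeasure M ?bad"
    by (simp add: nn_integral_add emeasure_space_1)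
  finally show ?thesis .
qed

lemma nn_integral_II_on_le:
  assumes "prob_space M" and [measurable]: "\<phi> \<in> measurable M M" "f \<in> borel_measurable M"
    and "1 \<le> N" and "a \<le> b" and "0 \<le> C"
    and lyap: "\<And>E. E \<in> {a..b} \<Longrightarrow> \<gamma> \<le> lyap M \<phi> f E"
    and LD: "\<And>E. E \<in> {a..b} \<Longrightarrow> measure M {\<omega> \<in> space M.
       \<gamma> / 2 \<le> \<bar>(1 / real N) * ln (opnorm (transfer \<phi> f E N \<omega>)) - lyap M \<phi> f E\<bar>} \<le> C * exp (- \<eta> * N)"
  shows "(\<integral>\<^sup>+\<omega>. II_on {a..b} \<phi> f N \<omega> \<partial>M) \<le> ennreal ((b - a) * (1 + C) * exp (- min \<gamma> \<eta> * N))"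
proof -
  interpret prob_space M by fact
  interpret pair_sigma_finite M lborel
    by unfold_locales
  let ?g = "\<lambda>\<omega> E. ennreal (1 / (opnorm (transfer \<phi> f E N \<omega>))\<^sup>2)"
  let ?c = "(1 + C) * exp (- min \<gamma> \<eta> * N)"
  have inner: "(\<integral>\<^sup>+\<omega>. ?g \<omega> E \<partial>M) \<le> ennreal ?c" if "E \<in> {a..b}" for E
  proof -
    have "exp (- \<gamma> * N) \<le> exp (- min \<gamma> \<eta> * N)" and "C * exp (- \<eta> * N) \<le> C * exp (- min \<gamma> \<eta> * N)"
      using \<open>0 \<le> C\<close> by (auto intro!: mult_left_mono mult_right_mono)
    then have "exp (- \<gamma> * N) + C * exp (- \<eta> * N) \<le> ?c"
      unfolding distrib_right by linarith
    then have sum: "ennreal (exp (- \<gamma> * N)) + ennreal (C * exp (- \<eta> * N)) \<le> ennreal ?c"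
      using \<open>0 \<le> C\<close> by (simp add: ennreal_plus[symmetric] del: ennreal_plus)
    have "(\<integral>\<^sup>+\<omega>. ?g \<omega> E \<partial>M) \<le> ennreal (exp (- \<gamma> * N)) + emeasure M {\<omega> \<in> space M.
       \<gamma> / 2 \<le> \<bar>(1 / real N) * ln (opnorm (transfer \<phi> f E N \<omega>)) - lyap M \<phi> f E\<bar>}"
      by (rule nn_integral_inverse_square_opnorm_le[OF assms(1-4) lyap[OF that]])
    also have "\<dots> \<le> ennreal (exp (- \<gamma> * N)) + ennreal (C * exp (- \<eta> * N))"
      using LD[OF that] by (intro add_left_mono) (simp add: emeasure_eq_measure ennreal_leI)
    finally show ?thesis
      using sum by (rule order_trans)
  qed
  have "case_prod (\<lambda>\<omega> E. ?g \<omega> E * indicator {a..b} E) \<in> borel_measurable (M \<Otimes>\<^sub>M lborel)"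
    unfolding case_prod_beta by measurable
  then have "(\<integral>\<^sup>+\<omega>. II_on {a..b} \<phi> f N \<omega> \<partial>M)
      = (\<integral>\<^sup>+E. (\<integral>\<^sup>+\<omega>. ?g \<omega> E * indicator {a..b} E \<partial>M) \<partial>lborel)"
    unfolding II_on_def by (rule Fubini'[symmetric])
  also have "\<dots> = (\<integral>\<^sup>+E. (\<integral>\<^sup>+\<omega>. ?g \<omega> E \<partial>M) * indicator {a..b} E \<partial>lborel)"
    by (intro nn_integral_cong nn_integral_multc) measurable
  also have "\<dots> \<le> (\<integral>\<^sup>+E. ennreal ?c * indicator {a..b} E \<partial>lborel)"
    by (intro nn_integral_mono) (use inner in \<open>auto split: split_indicator\<close>)
  also have "\<dots> = ennreal ?c * ennreal (b - a)"
    using \<open>a \<le> b\<close> by (simp add: nn_integral_cmult_indicator)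
  also have "\<dots> = ennreal ((b - a) * (1 + C) * exp (- min \<gamma> \<eta> * N))"
    using \<open>a \<le> b\<close> \<open>0 \<le> C\<close> by (simp add: ennreal_mult[symmetric] ac_simps)
  finally show ?thesis .
qed

lemma II_le_exp_if_II_on_le:
  assumes v: "\<And>k. \<bar>f ((\<phi> ^^ k) \<omega>)\<bar> \<le> B" and "0 \<le> B" and "1 \<le> N" and "\<delta> \<le> 1"
    and central: "II_on {- (2 * B + 5) .. 2 * B + 5} \<phi> f N \<omega> \<le> ennreal (exp (- \<delta> * N))"
  shows "0 < II \<phi> f N \<omega> \<and> II \<phi> f N \<omega> \<le> (1 + 8 * pi * (B + 4)\<^sup>2) * exp (- \<delta> * N)"
proof (rule II_pos_le_if_II_on_le)
  have "exp (- real N) \<le> exp (- \<delta> * N)"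
    using mult_right_mono[OF \<open>\<delta> \<le> 1\<close>, of "real N"] by simp
  then have "8 * pi * (B + 4)\<^sup>2 * exp (- real N) \<le> 8 * pi * (B + 4)\<^sup>2 * exp (- \<delta> * N)"
    by (intro mult_left_mono) auto
  then have tail: "II_on (- {- (2 * B + 5) .. 2 * B + 5}) \<phi> f N \<omega> \<le> ennreal (8 * pi * (B + 4)\<^sup>2 * exp (- \<delta> * N))"
    by (intro order_trans[OF II_on_tail_le[of f \<phi> \<omega> B N, OF v \<open>0 \<le> B\<close> \<open>1 \<le> N\<close>]] ennreal_leI)
  have "II_on UNIV \<phi> f N \<omega>
      = II_on {- (2 * B + 5) .. 2 * B + 5} \<phi> f N \<omega> + II_on (- {- (2 * B + 5) .. 2 * B + 5}) \<phi> f N \<omega>"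
    by (rule II_on_split) simp
  also have "\<dots> \<le> ennreal (exp (- \<delta> * N)) + ennreal (8 * pi * (B + 4)\<^sup>2 * exp (- \<delta> * N))"
    using central tail by (rule add_mono)
  also have "\<dots> = ennreal ((1 + 8 * pi * (B + 4)\<^sup>2) * exp (- \<delta> * N))"
    by (simp add: ennreal_plus[symmetric] distrib_right del: ennreal_plus)
  finally show "II_on UNIV \<phi> f N \<omega> \<le> ennreal ((1 + 8 * pi * (B + 4)\<^sup>2) * exp (- \<delta> * N))" .
qed

lemma (in prob_space) AE_eventually_less_exp_if_nn_integral_le:
  fixes J :: "nat \<Rightarrow> 'a \<Rightarrow> ennreal" and c \<delta> :: real
  assumes [measurable]: "\<And>N. J N \<in> borel_measurable M" and "0 < \<delta>" and "0 \<le> c"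
    and bound: "\<And>N. 1 \<le> N \<Longrightarrow> (\<integral>\<^sup>+\<omega>. J N \<omega> \<partial>M) \<le> ennreal (c * exp (- 2 * \<delta> * N))"
  shows "AE \<omega> in M. eventually (\<lambda>N. J N \<omega> < ennreal (exp (- \<delta> * N))) sequentially"
proof -
  define A where "A N = {\<omega> \<in> space M. ennreal (exp (- \<delta> * N)) \<le> J N \<omega>}" for N
  have [measurable]: "A N \<in> sets M" for N
    unfolding A_def by measurable
  have markov: "emeasure M (A N) \<le> ennreal (c * exp (- \<delta> * N))" if "1 \<le> N" for N
  proof -
    have "emeasure M (A N) = (\<integral>\<^sup>+\<omega>. indicator (A N) \<omega> \<partial>M)"
      by simp
    also have "\<dots> \<le> (\<integral>\<^sup>+\<omega>. ennreal (exp (\<delta> * N)) * J N \<omega> \<partial>M)"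
    proof (intro nn_integral_mono)
      fix \<omega>
      show "indicator (A N) \<omega> \<le> ennreal (exp (\<delta> * N)) * J N \<omega>"
      proof (cases "\<omega> \<in> A N")
        case True
        then have "ennreal (exp (\<delta> * N)) * ennreal (exp (- \<delta> * N)) \<le> ennreal (exp (\<delta> * N)) * J N \<omega>"
          unfolding A_def by (intro mult_left_mono) auto
        moreover have "ennreal (exp (\<delta> * N)) * ennreal (exp (- \<delta> * N)) = 1"
          by (simp add: ennreal_mult[symmetric] exp_add[symmetric])
        ultimately show ?thesis
          using True by simp
      qed simp
    qed
    also have "\<dots> = ennreal (exp (\<delta> * N)) * (\<integral>\<^sup>+\<omega>. J N \<omega> \<partial>M)"
      by (rule nn_integral_cmult) measurable
    also have "\<dots> \<le> ennreal (exp (\<delta> * N)) * ennreal (c * exp (- 2 * \<delta> * N))"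
      using bound[OF that] by (rule mult_left_mono) simp
    also have "\<dots> = ennreal (c * exp (- \<delta> * N))"
      using \<open>0 \<le> c\<close> by (simp add: ennreal_mult[symmetric] exp_add[symmetric] algebra_simps)
    finally show ?thesis .
  qed
  have geometric: "measure M (A N) \<le> (1 + c) * exp (- \<delta>) ^ N" for N
  proof (cases "N = 0")
    case True
    have "measure M (A 0) \<le> 1 + c"
      using prob_le_1[of "A 0"] \<open>0 \<le> c\<close> by linarith
    with True show ?thesis
      by simp
  next
    case False
    then have "measure M (A N) \<le> c * exp (- \<delta> * N)"
      using markov[of N] \<open>0 \<le> c\<close> by (simp add: emeasure_eq_measure)
    also have "\<dots> \<le> (1 + c) * exp (- \<delta>) ^ N"
      by (simp add: exp_of_nat_mult[symmetric] mult.commute)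
    finally show ?thesis .
  qed
  have "summable (\<lambda>N. (1 + c) * exp (- \<delta>) ^ N)"
    using \<open>0 < \<delta>\<close> by (intro summable_mult summable_geometric) simp
  then have "summable (\<lambda>N. measure M (A N))"
    by (rule summable_comparison_test') (use geometric in simp)
  then have "AE \<omega> in M. eventually (\<lambda>N. \<omega> \<in> space M - A N) sequentially"
    by (intro borel_cantelli_AE1) (auto simp: emeasure_eq_measure)
  then show ?thesis
  proof eventually_elim
    case (elim \<omega>)
    then show ?case
      by (rule eventually_mono) (simp add: A_def not_le)
  qed
qed

lemma AE_eventually_II_on_less_exp:
  fixes \<gamma> K :: real
  assumes "prob_space M" and [measurable]: "\<phi> \<in> measurable M M" "f \<in> borel_measurable M"
    and LD: "property_LD M \<phi> f" and "0 < \<gamma>" and lyap: "\<And>E. \<gamma> \<le> lyap M \<phi> f E" and "0 \<le> K"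
  obtains \<delta> :: real where "0 < \<delta>" and "\<delta> \<le> 1"
    and "AE \<omega> in M. eventually (\<lambda>N. II_on {- K..K} \<phi> f N \<omega> < ennreal (exp (- \<delta> * N))) sequentially"
proof -
  interpret prob_space M by fact
  obtain C \<eta> where "0 < C" "0 < \<eta>" and deviation: "\<And>N E. 1 \<le> N \<Longrightarrow> E \<in> {- K..K} \<Longrightarrow> measure M {\<omega> \<in> space M.
       \<gamma> / 2 \<le> \<bar>(1 / real N) * ln (opnorm (transfer \<phi> f E N \<omega>)) - lyap M \<phi> f E\<bar>} \<le> C * exp (- \<eta> * N)"
    using LD[unfolded property_LD_def, rule_format, of "\<gamma> / 2" "- K" K] \<open>0 < \<gamma>\<close> \<open>0 \<le> K\<close> by auto
  define \<delta> where "\<delta> = min (min \<gamma> \<eta>) 1 / 2"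
  have "0 < \<delta>" "\<delta> \<le> 1" "2 * \<delta> \<le> min \<gamma> \<eta>"
    using \<open>0 < \<gamma>\<close> \<open>0 < \<eta>\<close> unfolding \<delta>_def by auto
  have "AE \<omega> in M. eventually (\<lambda>N. II_on {- K..K} \<phi> f N \<omega> < ennreal (exp (- \<delta> * N))) sequentially"
  proof (rule AE_eventually_less_exp_if_nn_integral_le)
    fix N :: nat
    assume "1 \<le> N"
    have "(\<integral>\<^sup>+\<omega>. II_on {- K..K} \<phi> f N \<omega> \<partial>M) \<le> ennreal ((K - - K) * (1 + C) * exp (- min \<gamma> \<eta> * N))"
      using \<open>0 \<le> K\<close> \<open>0 < C\<close> by (intro nn_integral_II_on_le[OF assms(1-3) \<open>1 \<le> N\<close>] lyap deviation \<open>1 \<le> N\<close>) auto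
    also have "\<dots> \<le> ennreal (2 * K * (1 + C) * exp (- 2 * \<delta> * N))"
    proof (intro ennreal_leI)
      have "exp (- min \<gamma> \<eta> * N) \<le> exp (- 2 * \<delta> * N)"
        using mult_right_mono[OF \<open>2 * \<delta> \<le> min \<gamma> \<eta>\<close>, of "real N"] by simp
      then show "(K - - K) * (1 + C) * exp (- min \<gamma> \<eta> * N) \<le> 2 * K * (1 + C) * exp (- 2 * \<delta> * N)"
        using mult_left_mono[of _ _ "2 * K * (1 + C)"] \<open>0 \<le> K\<close> \<open>0 < C\<close> by simp
    qed
    finally show "(\<integral>\<^sup>+\<omega>. II_on {- K..K} \<phi> f N \<omega> \<partial>M) \<le> ennreal (2 * K * (1 + C) * exp (- 2 * \<delta> * N))" .
  qed (use \<open>0 < \<delta>\<close> \<open>0 \<le> K\<close> \<open>0 < C\<close> in auto)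
  with \<open>0 < \<delta>\<close> \<open>\<delta> \<le> 1\<close> show thesis
    using that by blast
qed

theorem theorem3p9:
  fixes M :: "'a measure" and \<phi> :: "'a \<Rightarrow> 'a" and f :: "'a \<Rightarrow> real"
  assumes "prob_space M"
    and "bij_betw \<phi> (space M) (space M)"
    and "\<phi> \<in> measurable M M"
    and "the_inv_into (space M) \<phi> \<in> measurable M M"
    and "distr M M \<phi> = M"
    and "ergodic_map M \<phi>"
    and "f \<in> borel_measurable M"
    and "\<exists>B. \<forall>\<omega>\<in>space M. \<bar>f \<omega>\<bar> \<le> B"
    and "property_LD M \<phi> f"
    and "(INF E. lyap M \<phi> f E) > 0"
  shows "AE \<omega> in M.
           liminf (\<lambda>N. ereal (- (1 / real N) * ln (II \<phi> f N \<omega>))) > 0"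
proof -
  interpret prob_space M by fact
  obtain B where B: "\<forall>\<omega>\<in>space M. \<bar>f \<omega>\<bar> \<le> B"
    using assms(8) by blast
  then have "0 \<le> B"
    using not_empty by fastforce
  have orbit: "\<bar>f ((\<phi> ^^ k) \<omega>)\<bar> \<le> B" if "\<omega> \<in> space M" for \<omega> k
    using B measurable_space[OF measurable_compose_n[OF assms(3)] that] by blast
  define \<gamma> where "\<gamma> = (INF E. lyap M \<phi> f E)"
  have lyap: "\<gamma> \<le> lyap M \<phi> f E" for E
    unfolding \<gamma>_def using lyap_nonneg_if_property_LD[OF assms(1,9)] by (intro cINF_lower bdd_belowI2) auto
  obtain \<delta> :: real where "0 < \<delta>" "\<delta> \<le> 1" and window:
    "AE \<omega> in M. eventually (\<lambda>N. II_on {- (2 * B + 5)..2 * B + 5} \<phi> f N \<omega> < ennreal (exp (- \<delta> * N))) sequentially"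
    using AE_eventually_II_on_less_exp[OF assms(1,3,7,9) _ lyap, of "2 * B + 5"] assms(10) \<open>0 \<le> B\<close>
    unfolding \<gamma>_def by auto
  from AE_space window show ?thesis
  proof eventually_elim
    case (elim \<omega>)
    have "eventually (\<lambda>N. 0 < II \<phi> f N \<omega> \<and> II \<phi> f N \<omega> \<le> (1 + 8 * pi * (B + 4)\<^sup>2) * exp (- \<delta> * N)) sequentially"
      using elim(2) eventually_ge_at_top[of 1]
      by eventually_elim (intro II_le_exp_if_II_on_le orbit[OF elim(1)] \<open>0 \<le> B\<close> \<open>\<delta> \<le> 1\<close>, auto)
    then show ?case
      by (rule liminf_neg_ln_pos_of_exponential_decay[OF \<open>0 < \<delta>\<close>])
  qed
qed

end
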